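(* Let $A$ be a commutative ring and $\sigma$ a hereditary torsion theory on $A$-modules such that $A$ is totally $\sigma$-artinian. Then every prime ideal $\mathfrak{p}\in\mathcal{K}(\sigma)$ is a minimal prime ideal of $A$. Consequently $\mathcal{K}(\sigma)=\mathcal{C}(\sigma)$.
   Context: $\mathcal{L}(\sigma)$ is the Gabriel filter of $\sigma$. $A$ is totally $\sigma$-artinian if for every descending chain of ideals $\mathfrak{a}_1\supseteq\mathfrak{a}_2\supseteq\cdots$ there exist $m$ and $\mathfrak{h}\in\mathcal{L}(\sigma)$ with $\mathfrak{a}_m\mathfrak{h}\subseteq\mathfrak{a}_s$ for all $s\ge m$. $\mathcal{K}(\sigma)$ is the set of prime ideals $\mathfrak{p}$ of $A$ with $\mathfrak{p}\notin\mathcal{L}(\sigma)$ (equivalently $A/\mathfrak{p}$ is $\sigma$-torsionfree), and $\mathcal{C}(\sigma)$ is the set of maximal elements of $\mathcal{K}(\sigma)$ under inclusion. *)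

theory Defs
  imports "HOL-Algebra.Ideal_Product"
begin

definition colon_ideal :: "('a, 'b) ring_scheme \<Rightarrow> 'a set \<Rightarrow> 'a \<Rightarrow> 'a set" where
  "colon_ideal R I r = {x \<in> carrier R. x \<otimes>\<^bsub>R\<^esub> r \<in> I}"

text \<open>Gabriel filter (Gabriel topology) of ideals of R; hereditary torsion theories
  on R-modules correspond bijectively to these, via sigma \<mapsto> L(sigma).\<close>
definition gabriel_filter :: "('a, 'b) ring_scheme \<Rightarrow> 'a set set \<Rightarrow> bool" where
  "gabriel_filter R L \<longleftrightarrow>
     (\<forall>I\<in>L. ideal I R) \<and>
     carrier R \<in> L \<and>
     (\<forall>I J. I \<in> L \<and> ideal J R \<and> I \<subseteq> J \<longrightarrow> J \<in> L) \<and>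
     (\<forall>I\<in>L. \<forall>r\<in>carrier R. colon_ideal R I r \<in> L) \<and>
     (\<forall>I J. ideal J R \<and> I \<in> L \<and> (\<forall>r\<in>I. colon_ideal R J r \<in> L) \<longrightarrow> J \<in> L)"

definition totally_artinian :: "('a, 'b) ring_scheme \<Rightarrow> 'a set set \<Rightarrow> bool" where
  "totally_artinian R L \<longleftrightarrow>
     (\<forall>a :: nat \<Rightarrow> 'a set. (\<forall>n. ideal (a n) R) \<and> (\<forall>n. a (Suc n) \<subseteq> a n) \<longrightarrow>
        (\<exists>m. \<exists>h\<in>L. \<forall>s\<ge>m. a m \<cdot>\<^bsub>R\<^esub> h \<subseteq> a s))"

definition Kset :: "('a, 'b) ring_scheme \<Rightarrow> 'a set set \<Rightarrow> 'a set set" where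
  "Kset R L = {p. primeideal p R \<and> p \<notin> L}"

definition Cset :: "('a, 'b) ring_scheme \<Rightarrow> 'a set set \<Rightarrow> 'a set set" where
  "Cset R L = {p \<in> Kset R L. \<forall>q \<in> Kset R L. p \<subseteq> q \<longrightarrow> q = p}"

definition minimal_prime :: "('a, 'b) ring_scheme \<Rightarrow> 'a set \<Rightarrow> bool" where
  "minimal_prime R p \<longleftrightarrow> primeideal p R \<and> (\<forall>q. primeideal q R \<and> q \<subseteq> p \<longrightarrow> q = p)"

end

theory Submission
  imports Defs
begin

text \<open>Suppose \<open>q \<subset> p\<close> are primes with \<open>p \<notin> L(\<sigma>)\<close>, and pick \<open>x \<in> p - q\<close>. The ideals
  \<open>x\<^sup>n A + q\<close> form a descending chain, so total \<open>\<sigma>\<close>-artinianity yields \<open>m\<close> and \<open>h \<in> L(\<sigma>)\<close>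
  with \<open>(x\<^sup>m A + q) h \<subseteq> x\<^bsup>m+1\<^esup> A + q\<close>. For \<open>y \<in> h\<close> this means \<open>x\<^sup>m (y - z x) \<in> q\<close> for some \<open>z\<close>,
  and since \<open>x\<^sup>m \<notin> q\<close> we get \<open>y \<in> x A + q \<subseteq> p\<close>. Thus \<open>h \<subseteq> p\<close>, and \<open>p \<in> L(\<sigma>)\<close> because
  Gabriel filters are closed upwards: a contradiction.\<close>

lemma gabriel_filter_ideal:
  "gabriel_filter R L \<Longrightarrow> h \<in> L \<Longrightarrow> ideal h R"
  unfolding gabriel_filter_def by blast

lemma gabriel_filter_upward_closed:
  "gabriel_filter R L \<Longrightarrow> h \<in> L \<Longrightarrow> ideal J R \<Longrightarrow> h \<subseteq> J \<Longrightarrow> J \<in> L"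
  unfolding gabriel_filter_def by blast

lemma totally_artinianD:
  assumes "totally_artinian R L" "\<And>n. ideal (a n) R" "\<And>n. a (Suc n) \<subseteq> a n"
  obtains m h where "h \<in> L" "a m \<cdot>\<^bsub>R\<^esub> h \<subseteq> a (Suc m)"
  using assms unfolding totally_artinian_def by (metis le_SucI order_refl)

context cring
begin

lemma primeideal_pow_notin:
  assumes "primeideal q R" "x \<in> carrier R" "x \<notin> q"
  shows "x [^] (n::nat) \<notin> q"
proof (induction n)
  case 0
  show ?case
    using ideal.one_imp_carrier primeideal.axioms(1) primeideal.I_notcarr assms(1) by fastforce
next
  case (Suc n)
  then show ?case using primeideal.I_prime[OF assms(1), of "x [^] n" x] assms(2,3) by auto
qed

lemma cgenideal_pow_Suc_add_subset:
  assumes "x \<in> carrier R"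
  shows "PIdl (x [^] Suc n) <+>\<^bsub>R\<^esub> q \<subseteq> PIdl (x [^] n) <+>\<^bsub>R\<^esub> q"
proof -
  have "PIdl (x [^] Suc n) \<subseteq> PIdl (x [^] n)"
    by (rule cgenideal_minimal[OF cgenideal_ideal])
      (use assms in \<open>auto simp: cgenideal_def m_comm\<close>)
  then show ?thesis unfolding set_add_def' by blast
qed

lemma mult_minus_eq_of_eq:
  assumes "a \<in> carrier R" "b \<in> carrier R" "c \<in> carrier R" "d \<in> carrier R" "w \<in> carrier R"
    and "a \<otimes> b = c \<otimes> (a \<otimes> d) \<oplus> w"
  shows "a \<otimes> (b \<ominus> c \<otimes> d) = w"
proof -
  have "a \<otimes> (b \<ominus> c \<otimes> d) = a \<otimes> b \<ominus> c \<otimes> (a \<otimes> d)"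
    using assms(1-4) by algebra
  also have "\<dots> = (c \<otimes> (a \<otimes> d) \<oplus> w) \<ominus> c \<otimes> (a \<otimes> d)"
    by (simp only: assms(6))
  also have "\<dots> = w" using assms(1-5) by algebra
  finally show ?thesis .
qed

lemma pow_mult_mem_cgenideal_add_prime:
  assumes q: "primeideal q R" and x: "x \<in> carrier R" "x \<notin> q" and y: "y \<in> carrier R"
    and mem: "x [^] m \<otimes> y \<in> PIdl (x [^] Suc m) <+>\<^bsub>R\<^esub> q"
  shows "y \<in> PIdl x <+>\<^bsub>R\<^esub> q"
proof -
  interpret primeideal q R by (rule q)
  obtain z w where z: "z \<in> carrier R" and w: "w \<in> q"
    and e: "x [^] m \<otimes> y = z \<otimes> x [^] Suc m \<oplus> w"
    using mem unfolding set_add_def' cgenideal_def by blast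
  have wc: "w \<in> carrier R" by (rule Icarr[OF w])
  have xm: "x [^] m \<in> carrier R" using x by simp
  have "x [^] m \<otimes> (y \<ominus> z \<otimes> x) = w"
    using e by (intro mult_minus_eq_of_eq xm y z x wc) (simp add: nat_pow_Suc)
  then have "x [^] m \<otimes> (y \<ominus> z \<otimes> x) \<in> q" using w by simp
  then have "x [^] m \<in> q \<or> y \<ominus> z \<otimes> x \<in> q"
    using x y z by (intro I_prime[OF xm]) simp_all
  then have diff: "y \<ominus> z \<otimes> x \<in> q"
    using primeideal_pow_notin[OF q x] by simp
  have "z \<otimes> x \<in> PIdl x" using z unfolding cgenideal_def by blast
  then have "z \<otimes> x \<oplus> (y \<ominus> z \<otimes> x) \<in> PIdl x <+> q"
    using diff unfolding set_add_def' by blast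
  moreover have "z \<otimes> x \<oplus> (y \<ominus> z \<otimes> x) = y" using x y z by algebra
  ultimately show ?thesis by simp
qed

lemma ideal_subset_set_add:
  assumes "ideal I R" "ideal J R"
  shows "I \<subseteq> I <+>\<^bsub>R\<^esub> J"
proof -
  have "I \<subseteq> Idl (I \<union> J)"
    using assms by (intro subset_trans[OF Un_upper1 genideal_self]) (auto dest: ideal.Icarr)
  then show ?thesis by (simp only: union_genideal[OF assms])
qed

lemma cgenideal_add_subset:
  assumes "ideal p R" "ideal q R" "x \<in> p" "q \<subseteq> p"
  shows "PIdl x <+>\<^bsub>R\<^esub> q \<subseteq> p"
proof -
  have x: "x \<in> carrier R" by (rule ideal.Icarr[OF assms(1,3)])
  have "PIdl x \<union> q \<subseteq> p"
    using cgenideal_minimal[OF assms(1,3)] assms(4) by (rule Un_least)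
  then have "Idl (PIdl x \<union> q) \<subseteq> p" by (rule genideal_minimal[OF assms(1)])
  then show ?thesis by (simp only: union_genideal[OF cgenideal_ideal[OF x] assms(2)])
qed

end

lemma totally_artinian_prime_not_in_filter_minimal:
  fixes R (structure)
  assumes "cring R" and gf: "gabriel_filter R L" and ta: "totally_artinian R L"
    and p: "primeideal p R" "p \<notin> L" and q: "primeideal q R" "q \<subseteq> p"
  shows "q = p"
proof (rule ccontr)
  interpret cring R by fact
  interpret P: primeideal p R by (rule p(1))
  interpret Q: primeideal q R by (rule q(1))
  assume "q \<noteq> p"
  then obtain x where "x \<in> p" "x \<notin> q" using q(2) by blast
  have x: "x \<in> carrier R" by (rule P.Icarr[OF \<open>x \<in> p\<close>])
  define a where "a n = PIdl (x [^] n) <+>\<^bsub>R\<^esub> q" for n :: nat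
  have "ideal (a n) R" for n
    unfolding a_def using x by (simp add: add_ideals cgenideal_ideal Q.is_ideal)
  moreover have "a (Suc n) \<subseteq> a n" for n
    unfolding a_def by (rule cgenideal_pow_Suc_add_subset[OF x])
  ultimately obtain m h where h: "h \<in> L" "a m \<cdot> h \<subseteq> a (Suc m)"
    by (rule totally_artinianD[OF ta])
  have "h \<subseteq> PIdl x <+>\<^bsub>R\<^esub> q"
  proof
    fix y assume "y \<in> h"
    then have y: "y \<in> carrier R" by (rule ideal.Icarr[OF gabriel_filter_ideal[OF gf h(1)]])
    have "x [^] m \<in> PIdl (x [^] m)" using x by (simp add: cgenideal_self)
    also have "\<dots> \<subseteq> a m"
      unfolding a_def using x by (simp add: ideal_subset_set_add cgenideal_ideal Q.is_ideal)
    finally have "x [^] m \<otimes> y \<in> a m \<cdot> h" using \<open>y \<in> h\<close> by (rule ideal_prod.prod)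
    then have "x [^] m \<otimes> y \<in> a (Suc m)" by (rule subsetD[OF h(2)])
    then show "y \<in> PIdl x <+>\<^bsub>R\<^esub> q"
      unfolding a_def by (rule pow_mult_mem_cgenideal_add_prime[OF q(1) x \<open>x \<notin> q\<close> y])
  qed
  also have "\<dots> \<subseteq> p"
    using q(2) \<open>x \<in> p\<close> by (rule cgenideal_add_subset[OF P.is_ideal Q.is_ideal, rotated])
  finally have "p \<in> L" by (rule gabriel_filter_upward_closed[OF gf h(1) P.is_ideal])
  with p(2) show False by contradiction
qed

theorem mainTheorem15:
  fixes R :: "('a, 'b) ring_scheme" and L :: "'a set set"
  assumes "cring R"
    and "gabriel_filter R L"
    and "totally_artinian R L"
  shows "(\<forall>p \<in> Kset R L. minimal_prime R p) \<and> Kset R L = Cset R L"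
proof -
  have minimal: "minimal_prime R p" if "p \<in> Kset R L" for p
    using that totally_artinian_prime_not_in_filter_minimal[OF assms]
    unfolding Kset_def minimal_prime_def by blast
  then have "Kset R L \<subseteq> Cset R L"
    unfolding Cset_def Kset_def minimal_prime_def by blast
  moreover have "Cset R L \<subseteq> Kset R L" unfolding Cset_def by blast
  ultimately show ?thesis using minimal by blast
qed

end
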